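(* Let $\mathsf{Ax}\subseteq\{\mathsf{N}_\Diamond,\mathsf{C}_\Diamond,\mathsf{I}_{\Diamond\Box}\}$. Then $\mathsf{CK}\oplus\mathsf{Ax}$ is sound and strongly complete with respect to the class $\mathcal{F}$ of $\mathsf{CK}$-frames satisfying ($\mathsf{A}$-suff) for each $\mathsf{A}\in\mathsf{Ax}$, i.e. $\Gamma\vdash_{\mathsf{Ax}}\varphi$ iff $\Gamma\Vdash_{\mathcal{F}}\varphi$ for all $\Gamma\subseteq\mathbf{L}$, $\varphi\in\mathbf{L}$; except that for $\mathsf{Ax}=\{\mathsf{N}_\Diamond\}$ and $\mathsf{Ax}=\{\mathsf{N}_\Diamond,\mathsf{C}_\Diamond\}$ the condition ($\mathsf{N}_\Diamond$-corr) is used in place of ($\mathsf{N}_\Diamond$-suff).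
   Context: Formulas: $\mathbf{L}$ is generated from a countably infinite set of propositional variables by $\varphi ::= p \mid \bot \mid \varphi\wedge\varphi \mid \varphi\vee\varphi \mid \varphi\to\varphi \mid \Box\varphi \mid \Diamond\varphi$. Axioms: $\mathsf{K}_\Box$: $\Box(\varphi\to\psi)\to(\Box\varphi\to\Box\psi)$; $\mathsf{K}_\Diamond$: $\Box(\varphi\to\psi)\to(\Diamond\varphi\to\Diamond\psi)$; $\mathsf{N}_\Diamond$: $\Diamond\bot\to\bot$; $\mathsf{C}_\Diamond$: $\Diamond(\varphi\vee\psi)\to\Diamond\varphi\vee\Diamond\psi$; $\mathsf{I}_{\Diamond\Box}$: $(\Diamond\varphi\to\Box\psi)\to\Box(\varphi\to\psi)$. For a set $\mathsf{Ax}$ of axioms, $\mathsf{CK}\oplus\mathsf{Ax}$ is the relation $\Gamma\vdash_{\mathsf{Ax}}\varphi$ inductively generated by: (Ax) $\Gamma\vdash\varphi$ whenever $\varphi$ is a substitution instance of an axiom of a standard Hilbert axiomatisation of intuitionistic propositional logic, of $\mathsf{K}_\Box$, of $\mathsf{K}_\Diamond$, or of an element of $\mathsf{Ax}$; (El) $\Gamma\vdash\varphi$ if $\varphi\in\Gamma$; (MP) from $\Gamma\vdash\varphi$ and $\Gamma\vdash\varphi\to\psi$ infer $\Gamma\vdash\psi$; (Nec) from $\emptyset\vdash\varphi$ infer $\Gamma\vdash\Box\varphi$. A $\mathsf{CK}$-frame is a tuple $(X,e,\le,R)$ where $(X,\le)$ is a preorder, $e\in X$ is a maximal element of $(X,\le)$,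 and $R$ is a binary relation on $X$ with $eRx$ iff $x=e$. A valuation assigns to each variable $p$ an upset $V(p)$ with $e\in V(p)$. Forcing: $x\Vdash p$ iff $x\in V(p)$; $x\Vdash\bot$ iff $x=e$; $\wedge,\vee$ pointwise; $x\Vdash\varphi\to\psi$ iff for all $y\ge x$, $y\Vdash\varphi$ implies $y\Vdash\psi$; $x\Vdash\Box\varphi$ iff for all $y,z$ with $x\le y$ and $yRz$, $z\Vdash\varphi$; $x\Vdash\Diamond\varphi$ iff for all $y\ge x$ there is $z$ with $yRz$ and $z\Vdash\varphi$. For a class $\mathcal{F}$ of frames, $\Gamma\Vdash_{\mathcal{F}}\varphi$ means: for every frame in $\mathcal{F}$, every valuation and every world $x$, if $x$ forces all of $\Gamma$ then $x\Vdash\varphi$. Frame conditions: ($\mathsf{N}_\Diamond$-suff) for all $x$, if $xRe$ then $x=e$. ($\mathsf{N}_\Diamond$-corr) for all $x$, if $yRe$ for all $y\ge x$ then $x=e$. ($\mathsf{C}_\Diamond$-suff) for all $x$ there is $x'\ge x$ such that for all $y,z$, if $x\le y$ and $x'Rz$ then there is $w$ with $yRw$ and $z\le w$. ($\mathsf{I}_{\Diamond\Box}$-suff) for all $x,y,z$ with $xRy$ and $y\le z$ there is $u$ with $x\le u$ and $uRz$ such that for every $s\ge u$ there is $t$ with $sRt$ and $z\le t$. *)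

theory Defs
  imports Main
begin

datatype form =
    Var nat
  | Bot
  | And form form
  | Or form form
  | Imp form form
  | Box form
  | Dia form

datatype ax = N_Dia | C_Dia | I_DiaBox

inductive ipc_axiom :: "form \<Rightarrow> bool" where
  ipc1: "ipc_axiom (Imp p (Imp q p))"
| ipc2: "ipc_axiom (Imp (Imp p (Imp q r)) (Imp (Imp p q) (Imp p r)))"
| ipc3: "ipc_axiom (Imp (And p q) p)"
| ipc4: "ipc_axiom (Imp (And p q) q)"
| ipc5: "ipc_axiom (Imp p (Imp q (And p q)))"
| ipc6: "ipc_axiom (Imp p (Or p q))"
| ipc7: "ipc_axiom (Imp q (Or p q))"
| ipc8: "ipc_axiom (Imp (Imp p r) (Imp (Imp q r) (Imp (Or p q) r)))"
| ipc9: "ipc_axiom (Imp Bot p)"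

inductive ck_axiom :: "form \<Rightarrow> bool" where
  K_Box: "ck_axiom (Imp (Box (Imp p q)) (Imp (Box p) (Box q)))"
| K_Dia: "ck_axiom (Imp (Box (Imp p q)) (Imp (Dia p) (Dia q)))"

inductive extra_axiom :: "ax \<Rightarrow> form \<Rightarrow> bool" where
  N_ax: "extra_axiom N_Dia (Imp (Dia Bot) Bot)"
| C_ax: "extra_axiom C_Dia (Imp (Dia (Or p q)) (Or (Dia p) (Dia q)))"
| I_ax: "extra_axiom I_DiaBox (Imp (Imp (Dia p) (Box q)) (Box (Imp p q)))"

inductive derivable :: "ax set \<Rightarrow> form set \<Rightarrow> form \<Rightarrow> bool" where
  Ax_ipc: "ipc_axiom \<phi> \<Longrightarrow> derivable Ax \<Gamma> \<phi>"
| Ax_ck: "ck_axiom \<phi> \<Longrightarrow> derivable Ax \<Gamma> \<phi>"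
| Ax_extra: "A \<in> Ax \<Longrightarrow> extra_axiom A \<phi> \<Longrightarrow> derivable Ax \<Gamma> \<phi>"
| El: "\<phi> \<in> \<Gamma> \<Longrightarrow> derivable Ax \<Gamma> \<phi>"
| MP: "derivable Ax \<Gamma> \<phi> \<Longrightarrow> derivable Ax \<Gamma> (Imp \<phi> \<psi>) \<Longrightarrow> derivable Ax \<Gamma> \<psi>"
| Nec: "derivable Ax {} \<phi> \<Longrightarrow> derivable Ax \<Gamma> (Box \<phi>)"

text \<open>A CK-frame (X, e, le, R): carrier X, fallible world e.\<close>
definition CK_frame :: "'w set \<Rightarrow> 'w \<Rightarrow> ('w \<Rightarrow> 'w \<Rightarrow> bool) \<Rightarrow> ('w \<Rightarrow> 'w \<Rightarrow> bool) \<Rightarrow> bool" where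
  "CK_frame X e le R \<longleftrightarrow>
     e \<in> X
   \<and> (\<forall>x y. le x y \<longrightarrow> x \<in> X \<and> y \<in> X)
   \<and> (\<forall>x y. R x y \<longrightarrow> x \<in> X \<and> y \<in> X)
   \<and> (\<forall>x\<in>X. le x x)
   \<and> (\<forall>x y z. le x y \<longrightarrow> le y z \<longrightarrow> le x z)
   \<and> (\<forall>x\<in>X. le e x \<longrightarrow> x = e)
   \<and> (\<forall>x\<in>X. R e x \<longleftrightarrow> x = e)"

definition valuation :: "'w set \<Rightarrow> 'w \<Rightarrow> ('w \<Rightarrow> 'w \<Rightarrow> bool) \<Rightarrow> (nat \<Rightarrow> 'w set) \<Rightarrow> bool" where
  "valuation X e le V \<longleftrightarrow>
     (\<forall>p. V p \<subseteq> X \<and> e \<in> V p \<and> (\<forall>x y. x \<in> V p \<longrightarrow> le x y \<longrightarrow> y \<in> V p))"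

fun forces :: "'w set \<Rightarrow> 'w \<Rightarrow> ('w \<Rightarrow> 'w \<Rightarrow> bool) \<Rightarrow> ('w \<Rightarrow> 'w \<Rightarrow> bool) \<Rightarrow> (nat \<Rightarrow> 'w set)
                 \<Rightarrow> 'w \<Rightarrow> form \<Rightarrow> bool" where
  "forces X e le R V x (Var p) \<longleftrightarrow> x \<in> V p"
| "forces X e le R V x Bot \<longleftrightarrow> x = e"
| "forces X e le R V x (And \<phi> \<psi>) \<longleftrightarrow> forces X e le R V x \<phi> \<and> forces X e le R V x \<psi>"
| "forces X e le R V x (Or \<phi> \<psi>) \<longleftrightarrow> forces X e le R V x \<phi> \<or> forces X e le R V x \<psi>"
| "forces X e le R V x (Imp \<phi> \<psi>) \<longleftrightarrow>
     (\<forall>y\<in>X. le x y \<longrightarrow> forces X e le R V y \<phi> \<longrightarrow> forces X e le R V y \<psi>)"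
| "forces X e le R V x (Box \<phi>) \<longleftrightarrow>
     (\<forall>y\<in>X. \<forall>z\<in>X. le x y \<longrightarrow> R y z \<longrightarrow> forces X e le R V z \<phi>)"
| "forces X e le R V x (Dia \<phi>) \<longleftrightarrow>
     (\<forall>y\<in>X. le x y \<longrightarrow> (\<exists>z\<in>X. R y z \<and> forces X e le R V z \<phi>))"

definition N_suff :: "'w set \<Rightarrow> 'w \<Rightarrow> ('w \<Rightarrow> 'w \<Rightarrow> bool) \<Rightarrow> ('w \<Rightarrow> 'w \<Rightarrow> bool) \<Rightarrow> bool" where
  "N_suff X e le R \<longleftrightarrow> (\<forall>x\<in>X. R x e \<longrightarrow> x = e)"

definition N_corr :: "'w set \<Rightarrow> 'w \<Rightarrow> ('w \<Rightarrow> 'w \<Rightarrow> bool) \<Rightarrow> ('w \<Rightarrow> 'w \<Rightarrow> bool) \<Rightarrow> bool" where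
  "N_corr X e le R \<longleftrightarrow> (\<forall>x\<in>X. (\<forall>y\<in>X. le x y \<longrightarrow> R y e) \<longrightarrow> x = e)"

definition C_suff :: "'w set \<Rightarrow> 'w \<Rightarrow> ('w \<Rightarrow> 'w \<Rightarrow> bool) \<Rightarrow> ('w \<Rightarrow> 'w \<Rightarrow> bool) \<Rightarrow> bool" where
  "C_suff X e le R \<longleftrightarrow>
     (\<forall>x\<in>X. \<exists>x'\<in>X. le x x' \<and>
        (\<forall>y\<in>X. \<forall>z\<in>X. le x y \<longrightarrow> R x' z \<longrightarrow> (\<exists>w\<in>X. R y w \<and> le z w)))"

definition I_suff :: "'w set \<Rightarrow> 'w \<Rightarrow> ('w \<Rightarrow> 'w \<Rightarrow> bool) \<Rightarrow> ('w \<Rightarrow> 'w \<Rightarrow> bool) \<Rightarrow> bool" where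
  "I_suff X e le R \<longleftrightarrow>
     (\<forall>x\<in>X. \<forall>y\<in>X. \<forall>z\<in>X. R x y \<longrightarrow> le y z \<longrightarrow>
        (\<exists>u\<in>X. le x u \<and> R u z \<and> (\<forall>s\<in>X. le u s \<longrightarrow> (\<exists>t\<in>X. R s t \<and> le z t))))"

definition frame_class :: "ax set \<Rightarrow> 'w set \<Rightarrow> 'w \<Rightarrow> ('w \<Rightarrow> 'w \<Rightarrow> bool) \<Rightarrow> ('w \<Rightarrow> 'w \<Rightarrow> bool) \<Rightarrow> bool" where
  "frame_class Ax X e le R \<longleftrightarrow>
     CK_frame X e le R
   \<and> (N_Dia \<in> Ax \<longrightarrow>
        (if Ax = {N_Dia} \<or> Ax = {N_Dia, C_Dia} then N_corr X e le R else N_suff X e le R))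
   \<and> (C_Dia \<in> Ax \<longrightarrow> C_suff X e le R)
   \<and> (I_DiaBox \<in> Ax \<longrightarrow> I_suff X e le R)"

definition sem_conseq :: "'w itself \<Rightarrow> ax set \<Rightarrow> form set \<Rightarrow> form \<Rightarrow> bool" where
  "sem_conseq (TYPE('w)) Ax \<Gamma> \<phi> \<longleftrightarrow>
     (\<forall>(X::'w set) e le R V x.
        frame_class Ax X e le R \<longrightarrow> valuation X e le V \<longrightarrow> x \<in> X \<longrightarrow>
        (\<forall>\<gamma>\<in>\<Gamma>. forces X e le R V x \<gamma>) \<longrightarrow> forces X e le R V x \<phi>)"

end

theory Submission
  imports Defs
begin

text \<open>Soundness is checked axiom by axiom: each (A-suff) condition makes the axiom A valid,
  and (N-suff) implies (N-corr), which already suffices for \<open>\<diamond>\<bottom> \<rightarrow> \<bottom>\<close>.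
  Completeness uses a canonical model whose worlds are pairs \<open>(\<Gamma>, \<Delta>)\<close> of a prime
  theory \<open>\<Gamma>\<close> and a directed set \<open>\<Delta>\<close> of formulas whose diamonds \<open>\<Gamma>\<close> rejects;
  every successor of \<open>(\<Gamma>, \<Delta>)\<close> must avoid \<open>\<Delta>\<close>. This extra component provides the
  world \<open>x' = (\<Gamma>\<^sub>x, {\<psi> | \<diamond>\<psi> \<notin> \<Gamma>\<^sub>x})\<close> demanded by (C-suff), while the world
  demanded by (I-suff) is a Lindenbaum extension avoiding the directed set
  \<open>{\<box>c | c \<notin> \<Gamma>\<^sub>z}\<close>. The fallible world \<open>(L, \<emptyset>)\<close> is the only world containing \<open>\<bottom>\<close>,
  and it is a successor exactly of the worlds containing \<open>\<diamond>\<bottom>\<close>; in the presence of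
  \<open>\<diamond>\<bottom> \<rightarrow> \<bottom>\<close> this gives (N-suff). Finally the canonical countermodel is copied
  into any type of worlds that is at least as large as \<open>form set set\<close>.\<close>

section \<open>Derived rules\<close>

lemma derivable_mono: "derivable A G p \<Longrightarrow> G \<subseteq> H \<Longrightarrow> derivable A H p"
  by (induction rule: derivable.induct) (auto intro: derivable.intros)

lemma derivable_imp_refl: "derivable A G (Imp p p)"
  by (meson MP Ax_ipc ipc1 ipc2)

lemma deduction_theorem: "derivable A (insert p G) q \<longleftrightarrow> derivable A G (Imp p q)"
proof
  show "derivable A (insert p G) q" if "derivable A G (Imp p q)"
    using that by (meson El MP derivable_mono insertI1 subset_insertI)
  show "derivable A G (Imp p q)" if "derivable A (insert p G) q"
    using that
  proof (induction A "insert p G" q rule: derivable.induct)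
    case (El \<phi> Ax)
    then show ?case
      by (metis MP derivable.El derivable_imp_refl Ax_ipc ipc1 insert_iff)
  next
    case (MP Ax \<phi> \<psi>)
    then show ?case by (meson Ax_ipc ipc2 derivable.MP)
  qed (meson MP Ax_ipc ipc1 derivable.intros)+
qed

lemma derivable_compact:
  assumes "derivable A G p"
  obtains F where "finite F" "F \<subseteq> G" "derivable A F p"
proof -
  from assms have "\<exists>F. finite F \<and> F \<subseteq> G \<and> derivable A F p"
  proof (induction rule: derivable.induct)
    case (MP Ax \<Gamma> \<phi> \<psi>)
    then obtain F1 F2 where "finite F1" "F1 \<subseteq> \<Gamma>" "derivable Ax F1 \<phi>"
      and "finite F2" "F2 \<subseteq> \<Gamma>" "derivable Ax F2 (Imp \<phi> \<psi>)"
      by blast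
    then show ?case
      by (meson derivable.MP derivable_mono finite_UnI le_supI sup_ge1 sup_ge2)
  qed (auto intro: derivable.intros)
  then show thesis
    using that by blast
qed

lemma derivable_cut:
  "derivable A S p \<Longrightarrow> \<forall>s\<in>S. derivable A H s \<Longrightarrow> derivable A H p"
  by (induction rule: derivable.induct) (auto intro: derivable.intros)

lemma derivable_And_intro:
  "derivable A G p \<Longrightarrow> derivable A G q \<Longrightarrow> derivable A G (And p q)"
  by (meson MP Ax_ipc ipc5)

lemma derivable_Or_elim:
  "derivable A G (Or p q) \<Longrightarrow> derivable A (insert p G) r \<Longrightarrow> derivable A (insert q G) r
    \<Longrightarrow> derivable A G r"
  by (meson MP Ax_ipc ipc8 deduction_theorem)

lemma derivable_Or_imp:
  "derivable A G (Imp p r) \<Longrightarrow> derivable A G (Imp q r) \<Longrightarrow> derivable A G (Imp (Or p q) r)"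
  by (meson MP Ax_ipc ipc8)

lemma derivable_Box_mono: "derivable A {} (Imp p q) \<Longrightarrow> derivable A G (Imp (Box p) (Box q))"
  by (meson MP Nec Ax_ck K_Box)

lemma derivable_Dia_mono: "derivable A {} (Imp p q) \<Longrightarrow> derivable A G (Imp (Dia p) (Dia q))"
  by (meson MP Nec Ax_ck K_Dia)

section \<open>Theories and the Lindenbaum lemma\<close>

definition deductively_closed :: "ax set \<Rightarrow> form set \<Rightarrow> bool" where
  "deductively_closed A G \<longleftrightarrow> (\<forall>p. derivable A G p \<longrightarrow> p \<in> G)"

definition disjunction_prime :: "form set \<Rightarrow> bool" where
  "disjunction_prime G \<longleftrightarrow> (\<forall>p q. Or p q \<in> G \<longrightarrow> p \<in> G \<or> q \<in> G)"

definition directed :: "ax set \<Rightarrow> form set \<Rightarrow> bool" where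
  "directed A P \<longleftrightarrow> (\<forall>a\<in>P. \<forall>b\<in>P. \<exists>c\<in>P. derivable A {} (Imp (Or a b) c))"

lemma deductively_closedD: "deductively_closed A G \<Longrightarrow> derivable A G p \<Longrightarrow> p \<in> G"
  by (simp add: deductively_closed_def)

lemma deductively_closed_UNIV: "deductively_closed A UNIV"
  by (simp add: deductively_closed_def)

lemma deductively_closed_MP:
  "deductively_closed A G \<Longrightarrow> Imp p q \<in> G \<Longrightarrow> p \<in> G \<Longrightarrow> q \<in> G"
  by (meson El MP deductively_closedD)

lemma deductively_closed_theorem:
  "deductively_closed A G \<Longrightarrow> derivable A {} p \<Longrightarrow> p \<in> G"
  using derivable_mono deductively_closedD by blast

lemma deductively_closed_Bot: "deductively_closed A G \<Longrightarrow> Bot \<in> G \<Longrightarrow> G = UNIV"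
  using deductively_closed_MP[OF _ deductively_closed_theorem[OF _ Ax_ipc[OF ipc9]]] by blast

lemma deductively_closed_And:
  "deductively_closed A G \<Longrightarrow> And p q \<in> G \<longleftrightarrow> p \<in> G \<and> q \<in> G"
  using deductively_closed_MP[OF _ deductively_closed_theorem[OF _ Ax_ipc[OF ipc3]]]
    deductively_closed_MP[OF _ deductively_closed_theorem[OF _ Ax_ipc[OF ipc4]]]
    derivable_And_intro[OF El El] deductively_closedD
  by blast

lemma disjunction_prime_Or:
  "deductively_closed A G \<Longrightarrow> disjunction_prime G \<Longrightarrow> Or p q \<in> G \<longleftrightarrow> p \<in> G \<or> q \<in> G"
  unfolding disjunction_prime_def
  using deductively_closed_MP[OF _ deductively_closed_theorem[OF _ Ax_ipc[OF ipc6]]]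
    deductively_closed_MP[OF _ deductively_closed_theorem[OF _ Ax_ipc[OF ipc7]]]
  by blast

lemma deductively_closed_Dia_Bot:
  "deductively_closed A G \<Longrightarrow> Dia Bot \<in> G \<Longrightarrow> Dia p \<in> G"
  using deductively_closed_MP[OF _ deductively_closed_theorem[OF _ derivable_Dia_mono[OF Ax_ipc[OF ipc9]]]]
  by blast

lemma Box_mem_if_derivable_from_Box_mem:
  assumes G: "deductively_closed A G" and der: "derivable A {f. Box f \<in> G} c"
  shows "Box c \<in> G"
proof -
  obtain F where F: "finite F" "F \<subseteq> {f. Box f \<in> G}" "derivable A F c"
    using der by (rule derivable_compact)
  from F show ?thesis
  proof (induction F arbitrary: c rule: finite_induct)
    case empty
    then show ?case using G Nec deductively_closedD by blast
  next
    case (insert p F)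
    have "Box (Imp p c) \<in> G"
      using insert deduction_theorem by simp
    moreover have "Box p \<in> G"
      using insert.prems by simp
    ultimately show ?case
      using deductively_closed_MP[OF G] deductively_closed_theorem[OF G Ax_ck[OF K_Box]] by blast
  qed
qed

lemma derivable_from_image_single:
  assumes S: "deductively_closed A S"
    and m: "\<And>a b. derivable A {} (Imp (m (And a b)) (m a))"
      "\<And>a b. derivable A {} (Imp (m (And a b)) (m b))"
    and der: "derivable A (m ` S \<union> B) p"
  shows "\<exists>s\<in>S. derivable A (insert (m s) B) p"
proof -
  obtain F0 where F0: "finite F0" "F0 \<subseteq> m ` S \<union> B" "derivable A F0 p"
    using der by (rule derivable_compact)
  define F where "F = F0 \<inter> m ` S"
  have F: "finite F" "F \<subseteq> m ` S" "derivable A (F \<union> B) p"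
    using F0 derivable_mono[OF F0(3), of "F \<union> B"] unfolding F_def by auto
  from F show ?thesis
  proof (induction F arbitrary: p rule: finite_induct)
    case empty
    have "Imp Bot Bot \<in> S"
      using S Ax_ipc[OF ipc9] deductively_closed_theorem by blast
    then show ?case using empty derivable_mono by (metis Un_empty_left subset_insertI)
  next
    case (insert x F)
    obtain d where d: "d \<in> S" "x = m d" using insert.prems by auto
    obtain s where s: "s \<in> S" "derivable A (insert (m s) B) (Imp x p)"
      using insert deduction_theorem[of A x "F \<union> B" p] by auto
    have "And s d \<in> S" using S s(1) d(1) deductively_closed_And by blast
    moreover have "derivable A (insert (m (And s d)) B) p"
    proof -
      let ?H = "insert (m (And s d)) B"
      have mH: "derivable A ?H (m (And s d))"
        by (simp add: El)
      have "derivable A ?H (m s)"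
        by (rule MP[OF mH derivable_mono[OF m(1)]]) simp
      moreover have "derivable A ?H (Imp (m s) (Imp x p))"
        using s(2) deduction_theorem derivable_mono by (metis subset_insertI)
      moreover have "derivable A ?H x"
        unfolding d(2) by (rule MP[OF mH derivable_mono[OF m(2)]]) simp
      ultimately show ?thesis
        by (meson MP)
    qed
    ultimately show ?case by blast
  qed
qed

lemma directed_empty: "directed A {}"
  by (simp add: directed_def)

lemma directed_singleton: "directed A {p}"
  unfolding directed_def using derivable_Or_imp derivable_imp_refl by blast

lemma directed_insert_Bot: "directed A P \<Longrightarrow> directed A (insert Bot P)"
  unfolding directed_def
  by (metis Ax_ipc derivable_Or_imp derivable_imp_refl insert_iff ipc9)

lemma maximal_unprovable_superset:
  assumes S: "\<forall>\<pi>\<in>P. \<not> derivable A S \<pi>"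
  obtains M where "S \<subseteq> M" "\<forall>\<pi>\<in>P. \<not> derivable A M \<pi>"
    "\<forall>p. (\<forall>\<pi>\<in>P. \<not> derivable A (insert p M) \<pi>) \<longrightarrow> p \<in> M"
proof -
  define \<A> where "\<A> = {T. S \<subseteq> T \<and> (\<forall>\<pi>\<in>P. \<not> derivable A T \<pi>)}"
  have "\<Union>C \<in> \<A>" if C: "C \<noteq> {}" "subset.chain \<A> C" for C
  proof -
    have C\<A>: "C \<subseteq> \<A>"
      using C(2) by (simp add: subset.chain_def)
    have "\<not> derivable A (\<Union>C) \<pi>" if "\<pi> \<in> P" for \<pi>
    proof
      assume "derivable A (\<Union>C) \<pi>"
      then obtain F where F: "finite F" "F \<subseteq> \<Union>C" "derivable A F \<pi>"
        by (rule derivable_compact)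
      obtain T where T: "T \<in> C" "F \<subseteq> T"
        using finite_subset_Union_chain[OF F(1,2) C] .
      have "\<not> derivable A T \<pi>"
        using T(1) C\<A> \<open>\<pi> \<in> P\<close> by (auto simp: \<A>_def)
      then show False
        using derivable_mono[OF F(3) T(2)] by blast
    qed
    moreover have "S \<subseteq> \<Union>C"
      using C(1) C\<A> by (auto simp: \<A>_def)
    ultimately show ?thesis
      by (simp add: \<A>_def)
  qed
  moreover have "S \<in> \<A>"
    using S by (simp add: \<A>_def)
  ultimately obtain M where M: "M \<in> \<A>" and max: "\<forall>N\<in>\<A>. M \<subseteq> N \<longrightarrow> N = M"
    using subset_Zorn_nonempty[of \<A>] by blast
  have "p \<in> M" if "\<forall>\<pi>\<in>P. \<not> derivable A (insert p M) \<pi>" for p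
  proof -
    have "insert p M \<in> \<A>"
      using M that by (auto simp: \<A>_def)
    then show ?thesis
      using max by blast
  qed
  with M show thesis
    using that unfolding \<A>_def by blast
qed

lemma lindenbaum:
  assumes P: "directed A P" and S: "\<forall>\<pi>\<in>P. \<not> derivable A S \<pi>"
  obtains T where "S \<subseteq> T" "deductively_closed A T" "disjunction_prime T"
    "\<forall>\<pi>\<in>P. \<not> derivable A T \<pi>"
proof -
  obtain M where SM: "S \<subseteq> M" and M: "\<forall>\<pi>\<in>P. \<not> derivable A M \<pi>"
    and extend: "\<forall>p. (\<forall>\<pi>\<in>P. \<not> derivable A (insert p M) \<pi>) \<longrightarrow> p \<in> M"
    using maximal_unprovable_superset[OF S] by blast
  have "deductively_closed A M"
    unfolding deductively_closed_def
  proof (intro allI impI)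
    fix p assume p: "derivable A M p"
    have "\<not> derivable A (insert p M) \<pi>" if "\<pi> \<in> P" for \<pi>
      using M that MP[OF p] deduction_theorem by blast
    then show "p \<in> M"
      using extend by blast
  qed
  moreover have "disjunction_prime M"
    unfolding disjunction_prime_def
  proof (intro allI impI)
    fix p q assume pq: "Or p q \<in> M"
    show "p \<in> M \<or> q \<in> M"
    proof (rule ccontr)
      assume "\<not> (p \<in> M \<or> q \<in> M)"
      then obtain \<pi>\<^sub>1 \<pi>\<^sub>2 where \<pi>: "\<pi>\<^sub>1 \<in> P" "derivable A (insert p M) \<pi>\<^sub>1"
        "\<pi>\<^sub>2 \<in> P" "derivable A (insert q M) \<pi>\<^sub>2"
        using extend by blast
      then obtain c where c: "c \<in> P" "derivable A {} (Imp (Or \<pi>\<^sub>1 \<pi>\<^sub>2) c)"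
        using P unfolding directed_def by blast
      have "derivable A M (Or \<pi>\<^sub>1 \<pi>\<^sub>2)"
        using derivable_Or_elim[OF El[OF pq] MP[OF \<pi>(2) Ax_ipc[OF ipc6]] MP[OF \<pi>(4) Ax_ipc[OF ipc7]]] .
      then have "derivable A M c"
        by (rule MP[OF _ derivable_mono[OF c(2)]]) simp
      then show False
        using c(1) M by blast
    qed
  qed
  ultimately show thesis
    using that SM M by blast
qed

section \<open>Soundness\<close>

locale ck_frame =
  fixes X :: "'w set" and e :: 'w and le R :: "'w \<Rightarrow> 'w \<Rightarrow> bool"
  assumes frame: "CK_frame X e le R"
begin

lemma le_carrier: "le x y \<Longrightarrow> x \<in> X \<and> y \<in> X"
  using frame by (simp add: CK_frame_def)

lemma R_carrier: "R x y \<Longrightarrow> x \<in> X \<and> y \<in> X"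
  using frame by (simp add: CK_frame_def)

lemma frame_refl: "x \<in> X \<Longrightarrow> le x x"
  using frame by (simp add: CK_frame_def)

lemma frame_trans: "le x y \<Longrightarrow> le y z \<Longrightarrow> le x z"
  using frame by (simp add: CK_frame_def)

lemma fallible_in_carrier: "e \<in> X"
  using frame by (simp add: CK_frame_def)

lemma le_fallible: "le e y \<Longrightarrow> y = e"
  using frame le_carrier by (simp add: CK_frame_def)

lemma R_fallible_iff: "R e z \<longleftrightarrow> z = e"
proof -
  have "\<forall>x\<in>X. R e x \<longleftrightarrow> x = e"
    using frame by (simp add: CK_frame_def)
  then show ?thesis
    using R_carrier fallible_in_carrier by blast
qed

lemma N_suff_imp_N_corr: "N_suff X e le R \<Longrightarrow> N_corr X e le R"
  unfolding N_suff_def N_corr_def using frame_refl by blast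

end

locale ck_model = ck_frame X e le R for X :: "'w set" and e le R +
  fixes V :: "nat \<Rightarrow> 'w set"
  assumes val: "valuation X e le V"
begin

abbreviation forces_at :: "'w \<Rightarrow> form \<Rightarrow> bool" (infix "\<Vdash>" 50) where
  "x \<Vdash> \<phi> \<equiv> forces X e le R V x \<phi>"

lemma forces_upward: "x \<Vdash> \<phi> \<Longrightarrow> le x y \<Longrightarrow> y \<Vdash> \<phi>"
proof (induction \<phi> arbitrary: x y)
  case (Var p)
  then show ?case using val by (auto simp: valuation_def)
next
  case Bot
  then show ?case using le_fallible by auto
next
  case (Imp \<phi> \<psi>)
  then show ?case using frame_trans[OF Imp.prems(2)] by (simp; blast)
next
  case (Box \<phi>)
  then show ?case using frame_trans[OF Box.prems(2)] by (simp; blast)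
next
  case (Dia \<phi>)
  then show ?case using frame_trans[OF Dia.prems(2)] by (simp; blast)
qed auto

lemma fallible_forces: "e \<Vdash> \<phi>"
proof (induction \<phi>)
  case (Var p)
  then show ?case using val by (simp add: valuation_def)
next
  case (Imp \<phi> \<psi>)
  then show ?case using le_fallible by auto
next
  case (Box \<phi>)
  then show ?case using le_fallible R_fallible_iff by (simp; metis)
next
  case (Dia \<phi>)
  then show ?case using le_fallible R_fallible_iff fallible_in_carrier by auto
qed simp_all

lemma ipc_axiom_valid: "ipc_axiom \<phi> \<Longrightarrow> x \<Vdash> \<phi>"
proof (induction rule: ipc_axiom.induct)
  case (ipc2 p q r)
  show ?case
    by simp (meson frame_refl frame_trans)
next
  case (ipc8 p r q)
  show ?case
    by simp (meson frame_refl frame_trans)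
qed (auto simp: fallible_forces intro: forces_upward)

lemma ck_axiom_valid: "ck_axiom \<phi> \<Longrightarrow> x \<Vdash> \<phi>"
proof (induction rule: ck_axiom.induct)
  case (K_Box p q)
  show ?case
    by simp (meson frame_refl frame_trans R_carrier)
next
  case (K_Dia p q)
  show ?case
    by simp (meson frame_refl frame_trans)
qed

lemma N_Dia_valid: "N_corr X e le R \<Longrightarrow> x \<in> X \<Longrightarrow> x \<Vdash> Imp (Dia Bot) Bot"
  unfolding N_corr_def by (auto dest: le_carrier)

lemma forces_DiaI:
  assumes "\<forall>u\<in>X. le y u \<longrightarrow> (\<exists>w\<in>X. R u w \<and> le z w)" and "z \<Vdash> \<psi>"
  shows "y \<Vdash> Dia \<psi>"
proof (subst forces.simps, intro ballI impI)
  fix u assume "u \<in> X" "le y u"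
  then obtain w where "w \<in> X" "R u w" "le z w"
    using assms(1) by blast
  then show "\<exists>w\<in>X. R u w \<and> w \<Vdash> \<psi>"
    using forces_upward[OF assms(2)] by blast
qed

lemma forces_BoxD: "x \<Vdash> Box \<phi> \<Longrightarrow> R x z \<Longrightarrow> z \<Vdash> \<phi>"
  using R_carrier frame_refl by (simp; blast)

lemma C_Dia_valid:
  assumes C: "C_suff X e le R"
  shows "x \<Vdash> Imp (Dia (Or p q)) (Or (Dia p) (Dia q))"
proof (subst forces.simps, intro ballI impI)
  fix y assume y: "y \<in> X" and pq: "y \<Vdash> Dia (Or p q)"
  obtain y' where y': "y' \<in> X" "le y y'"
    and lift: "\<forall>u\<in>X. \<forall>z\<in>X. le y u \<longrightarrow> R y' z \<longrightarrow> (\<exists>w\<in>X. R u w \<and> le z w)"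
    using C y unfolding C_suff_def by blast
  obtain z where z: "z \<in> X" "R y' z" "z \<Vdash> p \<or> z \<Vdash> q"
    using pq y' by auto
  then have "\<forall>u\<in>X. le y u \<longrightarrow> (\<exists>w\<in>X. R u w \<and> le z w)"
    using lift by blast
  then show "y \<Vdash> Or (Dia p) (Dia q)"
    using z(3) forces_DiaI by auto
qed

lemma I_DiaBox_valid:
  assumes I: "I_suff X e le R"
  shows "x \<Vdash> Imp (Imp (Dia p) (Box q)) (Box (Imp p q))"
proof -
  have "w \<Vdash> q"
    if "le x y" and DB: "y \<Vdash> Imp (Dia p) (Box q)" and "le y u" "R u v" "le v w" "w \<Vdash> p"
    for y u v w
  proof -
    have "u \<in> X" "v \<in> X" "w \<in> X"
      using R_carrier[OF \<open>R u v\<close>] le_carrier[OF \<open>le v w\<close>] by auto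
    then obtain s where s: "s \<in> X" "le u s" "R s w"
      and above: "\<forall>s'\<in>X. le s s' \<longrightarrow> (\<exists>t\<in>X. R s' t \<and> le w t)"
      using I \<open>R u v\<close> \<open>le v w\<close> unfolding I_suff_def by blast
    have "le y s"
      using frame_trans[OF \<open>le y u\<close> s(2)] .
    moreover have "s \<Vdash> Dia p"
      using forces_DiaI[OF above \<open>w \<Vdash> p\<close>] .
    ultimately have "s \<Vdash> Box q"
      using DB s(1) by simp
    then show "w \<Vdash> q"
      using forces_BoxD s(3) by blast
  qed
  then show ?thesis
    by (simp only: forces.simps(5,6)) blast
qed

lemma extra_axiom_valid:
  assumes "frame_class Ax X e le R" "A \<in> Ax" "extra_axiom A \<phi>" "x \<in> X"
  shows "x \<Vdash> \<phi>"
  using assms(3)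
proof cases
  case N_ax
  have "N_corr X e le R"
    using assms(1,2) N_suff_imp_N_corr N_ax
    by (auto simp: frame_class_def split: if_splits)
  then show ?thesis
    using N_ax N_Dia_valid assms(4) by blast
next
  case (C_ax p q)
  then show ?thesis
    using assms(1,2) C_Dia_valid by (auto simp: frame_class_def)
next
  case (I_ax p q)
  then show ?thesis
    using assms(1,2) I_DiaBox_valid by (auto simp: frame_class_def)
qed

lemma derivable_forces:
  "derivable Ax \<Gamma> \<phi> \<Longrightarrow> frame_class Ax X e le R \<Longrightarrow> x \<in> X \<Longrightarrow> \<forall>\<gamma>\<in>\<Gamma>. x \<Vdash> \<gamma> \<Longrightarrow> x \<Vdash> \<phi>"
proof (induction arbitrary: x rule: derivable.induct)
  case (MP Ax \<Gamma> \<phi> \<psi>)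
  then show ?case using frame_refl by simp
qed (auto simp: ipc_axiom_valid ck_axiom_valid extra_axiom_valid)

end

lemma frame_class_CK_frame: "frame_class Ax X e le R \<Longrightarrow> CK_frame X e le R"
  by (simp add: frame_class_def)

theorem soundness: "derivable Ax \<Gamma> \<phi> \<Longrightarrow> sem_conseq TYPE('w) Ax \<Gamma> \<phi>"
  unfolding sem_conseq_def
proof (intro allI impI)
  fix X :: "'w set" and e le R V x
  assume "derivable Ax \<Gamma> \<phi>" "frame_class Ax X e le R" "valuation X e le V" "x \<in> X"
    "\<forall>\<gamma>\<in>\<Gamma>. forces X e le R V x \<gamma>"
  moreover from this have "ck_model X e le R V"
    by (simp add: ck_model_def ck_model_axioms_def ck_frame_def frame_class_CK_frame)
  ultimately show "forces X e le R V x \<phi>"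
    by (simp add: ck_model.derivable_forces)
qed

section \<open>The canonical model\<close>

definition canonical_world :: "ax set \<Rightarrow> form set \<times> form set \<Rightarrow> bool" where
  "canonical_world A w \<longleftrightarrow> deductively_closed A (fst w) \<and> disjunction_prime (fst w)
     \<and> (\<forall>\<psi>\<in>snd w. Dia \<psi> \<notin> fst w) \<and> directed A (snd w)"

definition canonical_worlds :: "ax set \<Rightarrow> (form set \<times> form set) set" where
  "canonical_worlds A = {w. canonical_world A w}"

definition canonical_fallible :: "form set \<times> form set" where
  "canonical_fallible = (UNIV, {})"

definition canonical_le :: "ax set \<Rightarrow> form set \<times> form set \<Rightarrow> form set \<times> form set \<Rightarrow> bool" where
  "canonical_le A x y \<longleftrightarrow> canonical_world A x \<and> canonical_world A y \<and> fst x \<subseteq> fst y"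

definition canonical_R :: "ax set \<Rightarrow> form set \<times> form set \<Rightarrow> form set \<times> form set \<Rightarrow> bool" where
  "canonical_R A x y \<longleftrightarrow> canonical_world A x \<and> canonical_world A y
     \<and> {\<phi>. Box \<phi> \<in> fst x} \<subseteq> fst y \<and> fst y \<inter> snd x = {}
     \<and> (Bot \<in> fst y \<longrightarrow> Dia Bot \<in> fst x)"

definition canonical_val :: "ax set \<Rightarrow> nat \<Rightarrow> (form set \<times> form set) set" where
  "canonical_val A p = {w. canonical_world A w \<and> Var p \<in> fst w}"

abbreviation canonical_forces :: "ax set \<Rightarrow> form set \<times> form set \<Rightarrow> form \<Rightarrow> bool" where
  "canonical_forces A \<equiv>
     forces (canonical_worlds A) canonical_fallible (canonical_le A) (canonical_R A) (canonical_val A)"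

lemma canonical_world_fallible: "canonical_world A canonical_fallible"
  by (simp add: canonical_world_def canonical_fallible_def deductively_closed_UNIV
      disjunction_prime_def directed_empty)

lemma canonical_world_prime_theory:
  "deductively_closed A T \<Longrightarrow> disjunction_prime T \<Longrightarrow> canonical_world A (T, {})"
  by (simp add: canonical_world_def directed_empty)

lemma canonical_world_Dia_Bot:
  "canonical_world A w \<Longrightarrow> Dia Bot \<in> fst w \<Longrightarrow> snd w = {}"
  unfolding canonical_world_def using deductively_closed_Dia_Bot by blast

lemma canonical_world_UNIV:
  "canonical_world A w \<Longrightarrow> fst w = UNIV \<Longrightarrow> w = canonical_fallible"
  using canonical_world_Dia_Bot[of A w] unfolding canonical_fallible_def
  by (metis UNIV_I prod.collapse)

lemma canonical_world_Bot:
  "canonical_world A w \<Longrightarrow> Bot \<in> fst w \<Longrightarrow> w = canonical_fallible"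
  using canonical_world_UNIV deductively_closed_Bot canonical_world_def by blast

text \<open>If \<open>\<diamond>\<bottom> \<in> \<Gamma>\<^sub>y\<close> the fallible world is the required successor; otherwise a
  Lindenbaum extension of \<open>S \<union> {\<phi> | \<box>\<phi> \<in> \<Gamma>\<^sub>y}\<close> avoiding \<open>\<bottom>\<close> and \<open>\<Delta>\<^sub>y\<close> is.\<close>
lemma canonical_R_witness:
  assumes y: "canonical_world A y" and S: "deductively_closed A S"
    and Dia_S: "\<forall>s\<in>S. Dia s \<in> fst y"
  obtains w where "canonical_world A w" "canonical_R A y w" "S \<subseteq> fst w"
proof (cases "Dia Bot \<in> fst y")
  case True
  then have "canonical_R A y canonical_fallible"
    using y canonical_world_fallible canonical_world_Dia_Bot
    by (simp add: canonical_R_def canonical_fallible_def)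
  then show thesis
    using that[OF canonical_world_fallible] by (simp add: canonical_fallible_def)
next
  case False
  let ?B = "{\<phi>. Box \<phi> \<in> fst y}"
  have closed: "deductively_closed A (fst y)"
    using y by (simp add: canonical_world_def)
  have unprovable: "\<forall>\<pi>\<in>insert Bot (snd y). \<not> derivable A (S \<union> ?B) \<pi>"
  proof (intro ballI notI)
    fix \<pi> assume \<pi>: "\<pi> \<in> insert Bot (snd y)"
    assume "derivable A (S \<union> ?B) \<pi>"
    then obtain s where s: "s \<in> S" "derivable A (insert s ?B) \<pi>"
      using derivable_from_image_single[OF S Ax_ipc[OF ipc3] Ax_ipc[OF ipc4], of ?B \<pi>] by auto
    have "Box (Imp s \<pi>) \<in> fst y"
      using Box_mem_if_derivable_from_Box_mem[OF closed] s(2) deduction_theorem by blast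
    moreover have "Dia s \<in> fst y"
      using Dia_S s(1) by blast
    ultimately have "Dia \<pi> \<in> fst y"
      using deductively_closed_MP[OF closed] deductively_closed_theorem[OF closed Ax_ck[OF K_Dia]]
      by blast
    then show False
      using \<pi> False y unfolding canonical_world_def by blast
  qed
  have "directed A (insert Bot (snd y))"
    using y directed_insert_Bot by (simp add: canonical_world_def)
  then obtain T where T: "S \<union> ?B \<subseteq> T" "deductively_closed A T" "disjunction_prime T"
    "\<forall>\<pi>\<in>insert Bot (snd y). \<not> derivable A T \<pi>"
    using unprovable by (rule lindenbaum)
  have "T \<inter> snd y = {}" "Bot \<notin> T"
    using T(4) El by blast+
  then show thesis
    using that[of "(T, {})"] y T canonical_world_prime_theory
    by (auto simp: canonical_R_def)
qed

lemma canonical_forces_Imp: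
  assumes x: "canonical_world A x"
    and IH: "\<And>w. canonical_world A w \<Longrightarrow> canonical_forces A w a \<longleftrightarrow> a \<in> fst w"
      "\<And>w. canonical_world A w \<Longrightarrow> canonical_forces A w b \<longleftrightarrow> b \<in> fst w"
  shows "canonical_forces A x (Imp a b) \<longleftrightarrow> Imp a b \<in> fst x"
proof
  assume forces: "canonical_forces A x (Imp a b)"
  have closed: "deductively_closed A (fst x)"
    using x by (simp add: canonical_world_def)
  show "Imp a b \<in> fst x"
  proof (rule ccontr)
    assume "Imp a b \<notin> fst x"
    then have "\<forall>\<pi>\<in>{b}. \<not> derivable A (insert a (fst x)) \<pi>"
      using deduction_theorem deductively_closedD[OF closed] by blast
    with directed_singleton obtain T where T: "insert a (fst x) \<subseteq> T"
      "deductively_closed A T" "disjunction_prime T" "\<forall>\<pi>\<in>{b}. \<not> derivable A T \<pi>"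
      by (rule lindenbaum)
    then have w: "canonical_world A (T, {})"
      by (simp add: canonical_world_prime_theory)
    moreover have "canonical_le A x (T, {})"
      using w x T(1) by (auto simp: canonical_le_def)
    moreover have "canonical_forces A (T, {}) a" "\<not> canonical_forces A (T, {}) b"
      using IH[OF w] T(1,4) El by auto
    ultimately show False
      using forces by (auto simp: canonical_worlds_def)
  qed
next
  assume Imp: "Imp a b \<in> fst x"
  show "canonical_forces A x (Imp a b)"
  proof (subst forces.simps, intro ballI impI)
    fix y assume y: "y \<in> canonical_worlds A" "canonical_le A x y" "canonical_forces A y a"
    then have w: "canonical_world A y" and "a \<in> fst y" "Imp a b \<in> fst y"
      using IH(1) Imp by (auto simp: canonical_worlds_def canonical_le_def)
    then have "b \<in> fst y"
      using deductively_closed_MP canonical_world_def by blast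
    then show "canonical_forces A y b"
      using IH(2)[OF w] by blast
  qed
qed

lemma canonical_forces_Box:
  assumes x: "canonical_world A x"
    and IH: "\<And>w. canonical_world A w \<Longrightarrow> canonical_forces A w a \<longleftrightarrow> a \<in> fst w"
  shows "canonical_forces A x (Box a) \<longleftrightarrow> Box a \<in> fst x"
proof
  assume forces: "canonical_forces A x (Box a)"
  have closed: "deductively_closed A (fst x)" and prime: "disjunction_prime (fst x)"
    using x by (simp_all add: canonical_world_def)
  show "Box a \<in> fst x"
  proof (rule ccontr)
    assume "Box a \<notin> fst x"
    then have "\<forall>\<pi>\<in>{a}. \<not> derivable A {\<phi>. Box \<phi> \<in> fst x} \<pi>"
      using Box_mem_if_derivable_from_Box_mem[OF closed] by blast
    with directed_singleton obtain T where T: "{\<phi>. Box \<phi> \<in> fst x} \<subseteq> T"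
      "deductively_closed A T" "disjunction_prime T" "\<forall>\<pi>\<in>{a}. \<not> derivable A T \<pi>"
      by (rule lindenbaum)
    then have w: "canonical_world A (T, {})"
      by (simp add: canonical_world_prime_theory)
    have x': "canonical_world A (fst x, {})"
      using closed prime by (rule canonical_world_prime_theory)
    have "Bot \<notin> T"
      using T(2,4) El deductively_closed_Bot by (metis UNIV_I singletonI)
    then have "canonical_R A (fst x, {}) (T, {})"
      using w x' T(1) by (simp add: canonical_R_def)
    moreover have "canonical_le A x (fst x, {})"
      using x x' by (simp add: canonical_le_def)
    moreover have "\<not> canonical_forces A (T, {}) a"
      using IH[OF w] T(4) El by auto
    ultimately show False
      using forces w x' by (auto simp: canonical_worlds_def)
  qed
next
  assume "Box a \<in> fst x"
  then show "canonical_forces A x (Box a)"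
    using IH by (auto simp: canonical_worlds_def canonical_le_def canonical_R_def)
qed

lemma canonical_forces_Dia:
  assumes x: "canonical_world A x"
    and IH: "\<And>w. canonical_world A w \<Longrightarrow> canonical_forces A w a \<longleftrightarrow> a \<in> fst w"
  shows "canonical_forces A x (Dia a) \<longleftrightarrow> Dia a \<in> fst x"
proof
  assume forces: "canonical_forces A x (Dia a)"
  show "Dia a \<in> fst x"
  proof (rule ccontr)
    assume "Dia a \<notin> fst x"
    then have x': "canonical_world A (fst x, {a})"
      using x directed_singleton by (simp add: canonical_world_def)
    moreover have "canonical_le A x (fst x, {a})"
      using x x' by (simp add: canonical_le_def)
    ultimately obtain z where "canonical_R A (fst x, {a}) z" "canonical_forces A z a"
      using forces[unfolded forces.simps(7)] by (simp add: canonical_worlds_def) blast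
    then show False
      using IH by (auto simp: canonical_R_def)
  qed
next
  assume Dia: "Dia a \<in> fst x"
  show "canonical_forces A x (Dia a)"
  proof (subst forces.simps, intro ballI impI)
    fix y assume y: "y \<in> canonical_worlds A" "canonical_le A x y"
    then have w: "canonical_world A y" and "Dia a \<in> fst y"
      using Dia by (auto simp: canonical_worlds_def canonical_le_def)
    let ?S = "{b. derivable A {a} b}"
    have "deductively_closed A ?S"
      unfolding deductively_closed_def using derivable_cut by blast
    moreover have "\<forall>s\<in>?S. Dia s \<in> fst y"
    proof
      fix s assume "s \<in> ?S"
      then have "derivable A {} (Imp (Dia a) (Dia s))"
        using derivable_Dia_mono deduction_theorem by simp
      then show "Dia s \<in> fst y"
        using \<open>Dia a \<in> fst y\<close> w deductively_closed_MP deductively_closed_theorem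
        unfolding canonical_world_def by blast
    qed
    ultimately obtain z where z: "canonical_world A z" "canonical_R A y z" "?S \<subseteq> fst z"
      using canonical_R_witness[OF w] by blast
    then have "canonical_forces A z a"
      using IH El by blast
    then show "\<exists>z\<in>canonical_worlds A. canonical_R A y z \<and> canonical_forces A z a"
      using z unfolding canonical_worlds_def by blast
  qed
qed

lemma truth_lemma:
  "canonical_world A x \<Longrightarrow> canonical_forces A x \<phi> \<longleftrightarrow> \<phi> \<in> fst x"
proof (induction \<phi> arbitrary: x)
  case (Var p)
  then show ?case by (simp add: canonical_val_def)
next
  case Bot
  then show ?case
    using canonical_world_Bot[OF Bot.prems] by (auto simp: canonical_fallible_def)
next
  case (And a b)
  then show ?case
    using deductively_closed_And[of A "fst x"] by (simp add: canonical_world_def)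
next
  case (Or a b)
  then show ?case
    using disjunction_prime_Or[of A "fst x"] by (simp add: canonical_world_def)
next
  case (Imp a b)
  show ?case by (rule canonical_forces_Imp[OF Imp.prems Imp.IH])
next
  case (Box a)
  show ?case by (rule canonical_forces_Box[OF Box.prems Box.IH])
next
  case (Dia a)
  show ?case by (rule canonical_forces_Dia[OF Dia.prems Dia.IH])
qed

section \<open>Frame conditions of the canonical model\<close>

lemma canonical_frame: "CK_frame (canonical_worlds A) canonical_fallible (canonical_le A) (canonical_R A)"
  unfolding CK_frame_def
proof (intro conjI allI impI ballI)
  show "canonical_fallible \<in> canonical_worlds A"
    using canonical_world_fallible by (simp add: canonical_worlds_def)
next
  fix x y assume "canonical_le A x y"
  then show "x \<in> canonical_worlds A" "y \<in> canonical_worlds A"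
    by (simp_all add: canonical_le_def canonical_worlds_def)
next
  fix x y assume "canonical_R A x y"
  then show "x \<in> canonical_worlds A" "y \<in> canonical_worlds A"
    by (simp_all add: canonical_R_def canonical_worlds_def)
next
  fix x assume "x \<in> canonical_worlds A"
  then show "canonical_le A x x"
    by (simp add: canonical_le_def canonical_worlds_def)
next
  fix x y z assume "canonical_le A x y" "canonical_le A y z"
  then show "canonical_le A x z"
    by (auto simp: canonical_le_def)
next
  fix x assume "canonical_le A canonical_fallible x"
  then have "canonical_world A x" "fst x = UNIV"
    by (auto simp: canonical_le_def canonical_fallible_def)
  then show "x = canonical_fallible"
    by (rule canonical_world_UNIV)
next
  fix x assume x: "x \<in> canonical_worlds A"
  show "canonical_R A canonical_fallible x \<longleftrightarrow> x = canonical_fallible"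
  proof
    assume "canonical_R A canonical_fallible x"
    then have "canonical_world A x" "fst x = UNIV"
      by (auto simp: canonical_R_def canonical_fallible_def)
    then show "x = canonical_fallible"
      by (rule canonical_world_UNIV)
  next
    assume "x = canonical_fallible"
    then show "canonical_R A canonical_fallible x"
      using canonical_world_fallible by (simp add: canonical_R_def canonical_fallible_def)
  qed
qed

lemma canonical_valuation: "valuation (canonical_worlds A) canonical_fallible (canonical_le A) (canonical_val A)"
  unfolding valuation_def using canonical_world_fallible
  by (auto simp: canonical_val_def canonical_worlds_def canonical_fallible_def canonical_le_def)

interpretation canonical: ck_frame "canonical_worlds A" canonical_fallible "canonical_le A"
    "canonical_R A" for A
  using canonical_frame by (rule ck_frame.intro)

lemma canonical_R_above:
  assumes y: "canonical_world A y" and z: "canonical_world A z"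
    and Dia_z: "\<forall>\<sigma>\<in>fst z. Dia \<sigma> \<in> fst y"
  shows "\<exists>w\<in>canonical_worlds A. canonical_R A y w \<and> canonical_le A z w"
proof -
  have "deductively_closed A (fst z)"
    using z by (simp add: canonical_world_def)
  then obtain w where "canonical_world A w" "canonical_R A y w" "fst z \<subseteq> fst w"
    using canonical_R_witness[OF y _ Dia_z] by blast
  then show ?thesis
    using z unfolding canonical_worlds_def canonical_le_def by blast
qed

lemma canonical_N_suff: "N_Dia \<in> A \<Longrightarrow> N_suff (canonical_worlds A) canonical_fallible (canonical_le A) (canonical_R A)"
  unfolding N_suff_def
proof (intro ballI impI)
  fix x assume N: "N_Dia \<in> A" and x: "x \<in> canonical_worlds A"
    and "canonical_R A x canonical_fallible"
  then have "Dia Bot \<in> fst x" "canonical_world A x"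
    by (simp_all add: canonical_R_def canonical_fallible_def)
  moreover have "Imp (Dia Bot) Bot \<in> fst x"
    using \<open>canonical_world A x\<close> Ax_extra[OF N N_ax]
    unfolding canonical_world_def by (blast intro: deductively_closedD)
  ultimately show "x = canonical_fallible"
    using canonical_world_Bot deductively_closed_MP canonical_world_def by blast
qed

lemma canonical_C_suff: "C_Dia \<in> A \<Longrightarrow> C_suff (canonical_worlds A) canonical_fallible (canonical_le A) (canonical_R A)"
  unfolding C_suff_def
proof (intro ballI)
  fix x assume C: "C_Dia \<in> A" and "x \<in> canonical_worlds A"
  then have x: "canonical_world A x"
    by (simp add: canonical_worlds_def)
  then have closed: "deductively_closed A (fst x)" and prime: "disjunction_prime (fst x)"
    by (simp_all add: canonical_world_def)
  define D where "D = {\<psi>. Dia \<psi> \<notin> fst x}"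
  have "Or a b \<in> D" if "a \<in> D" "b \<in> D" for a b
  proof -
    have "Imp (Dia (Or a b)) (Or (Dia a) (Dia b)) \<in> fst x"
      using deductively_closedD[OF closed Ax_extra[OF C C_ax]] .
    then show ?thesis
      using that disjunction_prime_Or[OF closed prime] deductively_closed_MP[OF closed]
      unfolding D_def by blast
  qed
  then have "directed A D"
    unfolding directed_def using derivable_imp_refl by blast
  then have x': "canonical_world A (fst x, D)"
    using closed prime by (simp add: canonical_world_def D_def)
  text \<open>Successors of \<open>(fst x, D)\<close> contain only formulas whose diamonds lie in \<open>fst x\<close>.\<close>
  show "\<exists>x'\<in>canonical_worlds A. canonical_le A x x' \<and>
    (\<forall>y\<in>canonical_worlds A. \<forall>z\<in>canonical_worlds A. canonical_le A x y \<longrightarrow> canonical_R A x' z \<longrightarrow>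
      (\<exists>w\<in>canonical_worlds A. canonical_R A y w \<and> canonical_le A z w))"
  proof (rule bexI[of _ "(fst x, D)"], intro conjI ballI impI)
    show "(fst x, D) \<in> canonical_worlds A" "canonical_le A x (fst x, D)"
      using x x' by (simp_all add: canonical_worlds_def canonical_le_def)
    fix y z assume xy: "canonical_le A x y" and xz: "canonical_R A (fst x, D) z"
    then have "canonical_world A y" "canonical_world A z" "\<forall>\<sigma>\<in>fst z. Dia \<sigma> \<in> fst y"
      by (auto simp: canonical_R_def canonical_le_def D_def)
    then show "\<exists>w\<in>canonical_worlds A. canonical_R A y w \<and> canonical_le A z w"
      by (rule canonical_R_above)
  qed
qed

lemma directed_Box_compl:
  "disjunction_prime G \<Longrightarrow> directed A (Box ` (- G))"
  unfolding directed_def disjunction_prime_def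
proof (intro ballI)
  fix a b assume prime: "\<forall>p q. Or p q \<in> G \<longrightarrow> p \<in> G \<or> q \<in> G"
    and "a \<in> Box ` (- G)" "b \<in> Box ` (- G)"
  then obtain a' b' where "a = Box a'" "b = Box b'" "Or a' b' \<notin> G"
    by blast
  moreover have "derivable A {} (Imp (Or (Box a') (Box b')) (Box (Or a' b')))"
    by (rule derivable_Or_imp[OF derivable_Box_mono[OF Ax_ipc[OF ipc6]]
          derivable_Box_mono[OF Ax_ipc[OF ipc7]]])
  ultimately show "\<exists>c\<in>Box ` (- G). derivable A {} (Imp (Or a b) c)"
    by blast
qed

lemma canonical_I_suff: "I_DiaBox \<in> A \<Longrightarrow> I_suff (canonical_worlds A) canonical_fallible (canonical_le A) (canonical_R A)"
  unfolding I_suff_def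
proof (intro ballI impI)
  fix x y z assume I: "I_DiaBox \<in> A"
    and "x \<in> canonical_worlds A" "y \<in> canonical_worlds A" "z \<in> canonical_worlds A"
    and xy: "canonical_R A x y" and yz: "canonical_le A y z"
  then have x: "canonical_world A x" and z: "canonical_world A z"
    by (simp_all add: canonical_worlds_def)
  then have closed_x: "deductively_closed A (fst x)"
    and closed_z: "deductively_closed A (fst z)" and prime_z: "disjunction_prime (fst z)"
    by (simp_all add: canonical_world_def)
  show "\<exists>u\<in>canonical_worlds A. canonical_le A x u \<and> canonical_R A u z \<and>
    (\<forall>s\<in>canonical_worlds A. canonical_le A u s \<longrightarrow>
      (\<exists>t\<in>canonical_worlds A. canonical_R A s t \<and> canonical_le A z t))"
  proof (cases "z = canonical_fallible")
    case True
    show ?thesis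
    proof (rule bexI[of _ canonical_fallible], intro conjI ballI impI)
      show "canonical_fallible \<in> canonical_worlds A"
        using canonical.fallible_in_carrier .
      show "canonical_le A x canonical_fallible"
        using x canonical_world_fallible by (simp add: canonical_le_def canonical_fallible_def)
      show "canonical_R A canonical_fallible z"
        using True canonical.R_fallible_iff by blast
      fix s assume "s \<in> canonical_worlds A" "canonical_le A canonical_fallible s"
      then show "\<exists>t\<in>canonical_worlds A. canonical_R A s t \<and> canonical_le A z t"
        using True canonical.le_fallible canonical.R_fallible_iff canonical.fallible_in_carrier
          canonical.frame_refl by blast
    qed
  next
    case False
    text \<open>Axiom \<open>I\<close> turns \<open>\<Gamma>\<^sub>x, \<diamond>s \<turnstile> \<box>c\<close> into \<open>\<box>(s \<rightarrow> c) \<in> \<Gamma>\<^sub>x\<close>,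
      which \<open>R\<close> and \<open>\<le>\<close> carry into \<open>\<Gamma>\<^sub>z\<close>.\<close>
    have unprovable: "\<forall>\<pi>\<in>Box ` (- fst z). \<not> derivable A (Dia ` fst z \<union> fst x) \<pi>"
    proof (intro ballI notI)
      fix \<pi> assume "\<pi> \<in> Box ` (- fst z)" and "derivable A (Dia ` fst z \<union> fst x) \<pi>"
      then obtain c s where c: "\<pi> = Box c" "c \<notin> fst z"
        and s: "s \<in> fst z" "derivable A (insert (Dia s) (fst x)) (Box c)"
        using derivable_from_image_single[OF closed_z derivable_Dia_mono[OF Ax_ipc[OF ipc3]]
            derivable_Dia_mono[OF Ax_ipc[OF ipc4]]]
        by blast
      have "derivable A (fst x) (Imp (Dia s) (Box c))"
        using s(2) deduction_theorem by blast
      then have "Box (Imp s c) \<in> fst x"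
        using MP[OF _ Ax_extra[OF I I_ax]] deductively_closedD[OF closed_x] by blast
      then have "Imp s c \<in> fst z"
        using xy yz by (auto simp: canonical_R_def canonical_le_def)
      then show False
        using deductively_closed_MP[OF closed_z] s(1) c(2) by blast
    qed
    obtain T where T: "Dia ` fst z \<union> fst x \<subseteq> T" "deductively_closed A T" "disjunction_prime T"
      "\<forall>\<pi>\<in>Box ` (- fst z). \<not> derivable A T \<pi>"
      using lindenbaum[OF directed_Box_compl[OF prime_z] unprovable] by blast
    have u: "canonical_world A (T, {})"
      using T(2,3) by (rule canonical_world_prime_theory)
    have "{\<phi>. Box \<phi> \<in> T} \<subseteq> fst z"
      using T(4) El by blast
    moreover have "Bot \<notin> fst z"
      using False z canonical_world_Bot by blast
    ultimately have "canonical_R A (T, {}) z"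
      using u z by (simp add: canonical_R_def)
    moreover have "canonical_le A x (T, {})"
      using x u T(1) by (auto simp: canonical_le_def)
    moreover have "\<exists>t\<in>canonical_worlds A. canonical_R A s t \<and> canonical_le A z t"
      if "canonical_le A (T, {}) s" for s
    proof (rule canonical_R_above)
      show "canonical_world A s" "\<forall>\<sigma>\<in>fst z. Dia \<sigma> \<in> fst s"
        using that T(1) by (auto simp: canonical_le_def)
    qed (fact z)
    moreover have "(T, {}) \<in> canonical_worlds A"
      using u by (simp add: canonical_worlds_def)
    ultimately show ?thesis
      by blast
  qed
qed

lemma canonical_frame_class:
  "frame_class A (canonical_worlds A) canonical_fallible (canonical_le A) (canonical_R A)"
  unfolding frame_class_def
  using canonical_frame canonical_N_suff canonical_C_suff canonical_I_suff
    canonical.N_suff_imp_N_corr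
  by simp

lemma canonical_countermodel:
  assumes "\<not> derivable A \<Gamma> \<phi>"
  obtains x where "x \<in> canonical_worlds A" "\<forall>\<gamma>\<in>\<Gamma>. canonical_forces A x \<gamma>"
    "\<not> canonical_forces A x \<phi>"
proof -
  obtain T where T: "\<Gamma> \<subseteq> T" "deductively_closed A T" "disjunction_prime T"
    "\<forall>\<pi>\<in>{\<phi>}. \<not> derivable A T \<pi>"
    using lindenbaum[OF directed_singleton] assms by blast
  then have w: "canonical_world A (T, {})"
    by (simp add: canonical_world_prime_theory)
  moreover have "\<phi> \<notin> T"
    using T(4) El by blast
  ultimately show thesis
    using that[of "(T, {})"] T(1) truth_lemma[OF w] by (auto simp: canonical_worlds_def)
qed

section \<open>Completeness\<close>

definition rel_image :: "('a \<Rightarrow> 'b) \<Rightarrow> ('a \<Rightarrow> 'a \<Rightarrow> bool) \<Rightarrow> 'b \<Rightarrow> 'b \<Rightarrow> bool" where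
  "rel_image h r a b \<longleftrightarrow> (\<exists>u v. a = h u \<and> b = h v \<and> r u v)"

lemma rel_image_apply: "inj h \<Longrightarrow> rel_image h r (h u) (h v) \<longleftrightarrow> r u v"
  unfolding rel_image_def by (metis injD)

lemma rel_imageE:
  assumes "rel_image h r a b"
  obtains u v where "a = h u" "b = h v" "r u v"
  using assms unfolding rel_image_def by blast

context
  fixes h :: "'a \<Rightarrow> 'b"
  assumes h: "inj h"
begin

lemma forces_image:
  "forces (h ` X) (h e) (rel_image h le) (rel_image h R) (\<lambda>p. h ` V p) (h u) \<phi>
    \<longleftrightarrow> forces X e le R V u \<phi>"
  by (induction \<phi> arbitrary: u)
    (simp_all add: rel_image_apply[OF h] inj_image_mem_iff[OF h] inj_eq[OF h])

lemma CK_frame_image: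
  assumes "CK_frame X e le R"
  shows "CK_frame (h ` X) (h e) (rel_image h le) (rel_image h R)"
proof -
  interpret ck: ck_frame X e le R
    using assms by (rule ck_frame.intro)
  show ?thesis
    unfolding CK_frame_def
  proof (intro conjI allI impI ballI)
    show "h e \<in> h ` X"
      using ck.fallible_in_carrier by blast
  next
    fix a b assume "rel_image h le a b"
    then show "a \<in> h ` X" "b \<in> h ` X"
      by (auto elim!: rel_imageE dest: ck.le_carrier)
  next
    fix a b assume "rel_image h R a b"
    then show "a \<in> h ` X" "b \<in> h ` X"
      by (auto elim!: rel_imageE dest: ck.R_carrier)
  next
    fix a assume "a \<in> h ` X"
    then show "rel_image h le a a"
      using ck.frame_refl by (auto simp: rel_image_apply[OF h])
  next
    fix a b c assume "rel_image h le a b" "rel_image h le b c"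
    then show "rel_image h le a c"
      by (auto elim!: rel_imageE simp: rel_image_apply[OF h] inj_eq[OF h] intro: ck.frame_trans)
  next
    fix a assume "a \<in> h ` X" "rel_image h le (h e) a"
    then show "a = h e"
      by (auto simp: rel_image_apply[OF h] dest: ck.le_fallible)
  next
    fix a assume "a \<in> h ` X"
    then show "rel_image h R (h e) a \<longleftrightarrow> a = h e"
      by (auto simp: rel_image_apply[OF h] inj_eq[OF h] ck.R_fallible_iff)
  qed
qed

lemma valuation_image:
  assumes "valuation X e le V"
  shows "valuation (h ` X) (h e) (rel_image h le) (\<lambda>p. h ` V p)"
  using assms unfolding valuation_def rel_image_def by (blast dest: injD[OF h])

lemma frame_class_image:
  assumes "frame_class A X e le R"
  shows "frame_class A (h ` X) (h e) (rel_image h le) (rel_image h R)"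
proof -
  have "N_corr (h ` X) (h e) (rel_image h le) (rel_image h R) \<longleftrightarrow> N_corr X e le R"
    "N_suff (h ` X) (h e) (rel_image h le) (rel_image h R) \<longleftrightarrow> N_suff X e le R"
    "C_suff (h ` X) (h e) (rel_image h le) (rel_image h R) \<longleftrightarrow> C_suff X e le R"
    "I_suff (h ` X) (h e) (rel_image h le) (rel_image h R) \<longleftrightarrow> I_suff X e le R"
    by (simp_all add: N_corr_def N_suff_def C_suff_def I_suff_def rel_image_apply[OF h]
        inj_eq[OF h])
  then show ?thesis
    using assms CK_frame_image unfolding frame_class_def by presburger
qed

lemma not_sem_conseq_image:
  fixes X :: "'a set"
  assumes "frame_class A X e le R" "valuation X e le V" "x \<in> X"
    "\<forall>\<gamma>\<in>\<Gamma>. forces X e le R V x \<gamma>" "\<not> forces X e le R V x \<phi>"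
  shows "\<not> sem_conseq TYPE('b) A \<Gamma> \<phi>"
proof -
  have "h x \<in> h ` X"
    "\<forall>\<gamma>\<in>\<Gamma>. forces (h ` X) (h e) (rel_image h le) (rel_image h R) (\<lambda>p. h ` V p) (h x) \<gamma>"
    "\<not> forces (h ` X) (h e) (rel_image h le) (rel_image h R) (\<lambda>p. h ` V p) (h x) \<phi>"
    using assms(3-5) forces_image by auto
  then show ?thesis
    unfolding sem_conseq_def using frame_class_image[OF assms(1)] valuation_image[OF assms(2)]
    by blast
qed

end

text \<open>Canonical worlds embed into \<open>form set set\<close>; this is what the size hypothesis on the
  type of worlds is needed for.\<close>
lemma inj_world_code: "inj (\<lambda>(\<Gamma>, \<Delta>). {Box ` \<Gamma> \<union> Dia ` \<Delta>})"
proof (rule inj_on_inverseI)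
  show "(\<lambda>S. ({\<phi>. Box \<phi> \<in> \<Union>S}, {\<phi>. Dia \<phi> \<in> \<Union>S})) ((\<lambda>(\<Gamma>, \<Delta>). {Box ` \<Gamma> \<union> Dia ` \<Delta>}) w) = w"
    for w :: "form set \<times> form set"
    by (cases w) auto
qed

theorem strong_completeness:
  assumes "\<exists>f :: form set set \<Rightarrow> 'w. inj f" and "sem_conseq TYPE('w) A \<Gamma> \<phi>"
  shows "derivable A \<Gamma> \<phi>"
proof (rule ccontr)
  assume "\<not> derivable A \<Gamma> \<phi>"
  then obtain x where x: "x \<in> canonical_worlds A" "\<forall>\<gamma>\<in>\<Gamma>. canonical_forces A x \<gamma>"
    "\<not> canonical_forces A x \<phi>"
    by (rule canonical_countermodel)
  obtain f :: "form set set \<Rightarrow> 'w" where "inj f"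
    using assms(1) by blast
  then have "inj (f \<circ> (\<lambda>(\<Gamma>, \<Delta>). {Box ` \<Gamma> \<union> Dia ` \<Delta>}))"
    using inj_world_code by (rule inj_compose)
  then have "\<not> sem_conseq TYPE('w) A \<Gamma> \<phi>"
    using canonical_frame_class canonical_valuation x by (rule not_sem_conseq_image)
  then show False
    using assms(2) by contradiction
qed

theorem mainTheorem9:
  fixes Ax :: "ax set" and \<Gamma> :: "form set" and \<phi> :: form
  assumes big: "\<exists>f :: form set set \<Rightarrow> 'w. inj f"
  shows "(derivable Ax \<Gamma> \<phi> \<longrightarrow> sem_conseq TYPE('v) Ax \<Gamma> \<phi>)
       \<and> (derivable Ax \<Gamma> \<phi> \<longleftrightarrow> sem_conseq TYPE('w) Ax \<Gamma> \<phi>)"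
  using soundness[where 'w = 'v] soundness[where 'w = 'w] strong_completeness[OF big]
  by blast

end
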